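(* Let $R\cong\prod_{i=1}^kR/\mathfrak m_i^{t_i}$ be a finite commutative principal ideal ring, where $\mathfrak m_i$ are its maximal ideals with indices of stability $t_i$, and let $\mathbb F_{q_i}$ be the residue field of $R/\mathfrak m_i^{t_i}$. Let $n$ be a positive integer with $\gcd(n,q_i)=1$ for all $i$. If some $t_i$ is odd, then no cyclic code of length $n$ over $R$ is self-dual.
   Context: All rings are finite, commutative, with identity. The index of stability of $\mathfrak m_i$ is the smallest $t\ge1$ with $\mathfrak m_i^t=\mathfrak m_i^{t+1}$; $R/\mathfrak m_i^{t_i}$ is a finite chain ring whose maximal ideal has nilpotency index $t_i$. A code of length $n$ is an $R$-submodule of $R^n$; cyclic means closed under cyclic shift; self-dual means $C=C^\perp$ for $[u,v]=\sum u_jv_j$. *)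

theory Defs
  imports "HOL-Algebra.QuotRing" "HOL-Algebra.Ideal_Product"
begin

primrec ideal_pow :: "('a, 'b) ring_scheme \<Rightarrow> 'a set \<Rightarrow> nat \<Rightarrow> 'a set" where
  "ideal_pow R I 0 = carrier R"
| "ideal_pow R I (Suc t) = ideal_prod R I (ideal_pow R I t)"

definition stability_index :: "('a, 'b) ring_scheme \<Rightarrow> 'a set \<Rightarrow> nat" where
  "stability_index R I = (LEAST t. 1 \<le> t \<and> ideal_pow R I t = ideal_pow R I (Suc t))"

definition words :: "('a, 'b) ring_scheme \<Rightarrow> nat \<Rightarrow> (nat \<Rightarrow> 'a) set" where
  "words R n = {v. (\<forall>i<n. v i \<in> carrier R) \<and> (\<forall>i\<ge>n. v i = \<zero>\<^bsub>R\<^esub>)}"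

definition word_zero :: "('a, 'b) ring_scheme \<Rightarrow> nat \<Rightarrow> 'a" where
  "word_zero R = (\<lambda>i. \<zero>\<^bsub>R\<^esub>)"

definition word_add :: "('a, 'b) ring_scheme \<Rightarrow> nat \<Rightarrow> (nat \<Rightarrow> 'a) \<Rightarrow> (nat \<Rightarrow> 'a) \<Rightarrow> nat \<Rightarrow> 'a" where
  "word_add R n u v = (\<lambda>i. if i < n then u i \<oplus>\<^bsub>R\<^esub> v i else \<zero>\<^bsub>R\<^esub>)"

definition word_smult :: "('a, 'b) ring_scheme \<Rightarrow> nat \<Rightarrow> 'a \<Rightarrow> (nat \<Rightarrow> 'a) \<Rightarrow> nat \<Rightarrow> 'a" where
  "word_smult R n r v = (\<lambda>i. if i < n then r \<otimes>\<^bsub>R\<^esub> v i else \<zero>\<^bsub>R\<^esub>)"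

definition linear_code :: "('a, 'b) ring_scheme \<Rightarrow> nat \<Rightarrow> (nat \<Rightarrow> 'a) set \<Rightarrow> bool" where
  "linear_code R n C \<longleftrightarrow> C \<subseteq> words R n \<and> word_zero R \<in> C
     \<and> (\<forall>u\<in>C. \<forall>v\<in>C. word_add R n u v \<in> C)
     \<and> (\<forall>r\<in>carrier R. \<forall>v\<in>C. word_smult R n r v \<in> C)"

definition cyc_shift :: "('a, 'b) ring_scheme \<Rightarrow> nat \<Rightarrow> (nat \<Rightarrow> 'a) \<Rightarrow> nat \<Rightarrow> 'a" where
  "cyc_shift R n v = (\<lambda>i. if i < n then v ((i + n - 1) mod n) else \<zero>\<^bsub>R\<^esub>)"

definition cyclic_code :: "('a, 'b) ring_scheme \<Rightarrow> nat \<Rightarrow> (nat \<Rightarrow> 'a) set \<Rightarrow> bool" where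
  "cyclic_code R n C \<longleftrightarrow> linear_code R n C \<and> (\<forall>v\<in>C. cyc_shift R n v \<in> C)"

definition inner_prod :: "('a, 'b) ring_scheme \<Rightarrow> nat \<Rightarrow> (nat \<Rightarrow> 'a) \<Rightarrow> (nat \<Rightarrow> 'a) \<Rightarrow> 'a" where
  "inner_prod R n u v = (\<Oplus>\<^bsub>R\<^esub> j\<in>{..<n}. u j \<otimes>\<^bsub>R\<^esub> v j)"

definition dual_code :: "('a, 'b) ring_scheme \<Rightarrow> nat \<Rightarrow> (nat \<Rightarrow> 'a) set \<Rightarrow> (nat \<Rightarrow> 'a) set" where
  "dual_code R n C = {u \<in> words R n. \<forall>v\<in>C. inner_prod R n u v = \<zero>\<^bsub>R\<^esub>}"

definition self_dual :: "('a, 'b) ring_scheme \<Rightarrow> nat \<Rightarrow> (nat \<Rightarrow> 'a) set \<Rightarrow> bool" where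
  "self_dual R n C \<longleftrightarrow> C = dual_code R n C"

end

theory Submission
  imports Defs "HOL-Algebra.Multiplicative_Group"
begin

text \<open>The constant words of a self-dual cyclic code \<open>C\<close> of length \<open>n\<close> form an ideal \<open>(g)\<close>
  of \<open>R\<close>. Summing the cyclic shifts of a codeword gives the constant word of its coordinate sum,
  so a constant word is orthogonal to \<open>C\<close> as soon as its entry annihilates \<open>(g)\<close>; hence
  \<open>C = C\<^sup>\<bottom>\<close> yields \<open>n g\<^sup>2 = 0\<close> and \<open>Ann(g) = (g)\<close>, and \<open>n\<close> is a unit because it is prime to
  every residue field size. Now fix a maximal ideal \<open>(p)\<close> with index of stability \<open>t\<close> and write
  \<open>g = s p\<^sup>v\<close> with \<open>s\<close> a unit modulo \<open>p\<^sup>t\<close>. Then \<open>g\<^sup>2 = 0\<close> forces \<open>t \<le> 2v\<close>, while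
  \<open>Ann(g) = (g)\<close>, applied to \<open>p\<^sup>t\<^sup>-\<^sup>v\<close> in the local factor \<open>R/(p\<^sup>t)\<close>, forces \<open>2v \<le> t\<close>; so \<open>t\<close> is even.\<close>

section \<open>Principal ideals and units in finite commutative rings\<close>

context cring
begin

lemma cgenideal_mem_iff: "x \<in> PIdl a \<longleftrightarrow> (\<exists>r\<in>carrier R. x = r \<otimes> a)"
  unfolding cgenideal_def by blast

lemma cgenideal_subset: "a \<in> carrier R \<Longrightarrow> PIdl a \<subseteq> carrier R"
  by (auto simp: cgenideal_mem_iff)

lemma ideal_prod_cgenideal:
  assumes "a \<in> carrier R" "b \<in> carrier R"
  shows "ideal_prod R (PIdl a) (PIdl b) = PIdl (a \<otimes> b)"
proof
  show "ideal_prod R (PIdl a) (PIdl b) \<subseteq> PIdl (a \<otimes> b)"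
    using ideal_prod_eq_genideal[OF cgenideal_ideal[OF assms(1)] cgenideal_ideal[OF assms(2)]]
      cgenideal_prod[OF assms] genideal_minimal[OF cgenideal_ideal] assms
    by (metis m_closed order_refl)
  show "PIdl (a \<otimes> b) \<subseteq> ideal_prod R (PIdl a) (PIdl b)"
  proof
    fix x assume "x \<in> PIdl (a \<otimes> b)"
    then obtain r where r: "r \<in> carrier R" "x = (r \<otimes> a) \<otimes> b"
      using assms by (auto simp: cgenideal_mem_iff m_assoc)
    have "r \<otimes> a \<in> PIdl a" using r assms by (auto simp: cgenideal_mem_iff)
    then show "x \<in> ideal_prod R (PIdl a) (PIdl b)"
      using ideal_prod.prod[of _ "PIdl a" b] cgenideal_self[OF assms(2)] r(2) by blast
  qed
qed

lemma ideal_pow_cgenideal: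
  assumes "p \<in> carrier R"
  shows "ideal_pow R (PIdl p) k = PIdl (p [^] k)"
proof (induction k)
  case 0
  have "carrier R = PIdl \<one>" by (auto simp: cgenideal_mem_iff)
  then show ?case by simp
next
  case (Suc k)
  then show ?case using assms ideal_prod_cgenideal[of p "p [^] k"]
    by (simp add: nat_pow_Suc2 m_comm)
qed

lemma cgenideal_pow_antimono:
  assumes p: "p \<in> carrier R" and "i \<le> (j::nat)"
  shows "PIdl (p [^] j) \<subseteq> PIdl (p [^] i)"
proof (rule cgenideal_minimal[OF cgenideal_ideal])
  have "p [^] j = p [^] (j - i) \<otimes> p [^] i"
    using \<open>i \<le> j\<close> p by (simp add: nat_pow_mult)
  then show "p [^] j \<in> PIdl (p [^] i)" using p by (auto simp: cgenideal_mem_iff)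
qed (use p in simp)

lemma one_minus_dvd_one_minus_pow:
  assumes x: "x \<in> carrier R"
  shows "\<exists>w\<in>carrier R. w \<otimes> (\<one> \<ominus> x) = \<one> \<ominus> x [^] (k::nat)"
proof (induction k)
  case 0
  show ?case using x by (intro bexI[of _ \<zero>]) (simp_all, algebra)
next
  case (Suc k)
  then obtain w where w: "w \<in> carrier R" "w \<otimes> (\<one> \<ominus> x) = \<one> \<ominus> x [^] k" by blast
  have "(w \<oplus> x [^] k) \<otimes> (\<one> \<ominus> x) = w \<otimes> (\<one> \<ominus> x) \<oplus> x [^] k \<ominus> x [^] k \<otimes> x"
    using w(1) x nat_pow_closed[OF x, of k] by algebra
  also have "\<dots> = \<one> \<ominus> x [^] k \<oplus> x [^] k \<ominus> x [^] k \<otimes> x"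
    by (simp only: w(2))
  also have "\<dots> = \<one> \<ominus> x [^] k \<otimes> x"
    using x nat_pow_closed[OF x, of k] by algebra
  also have "\<dots> = \<one> \<ominus> x [^] Suc k"
    using x by (simp only: nat_pow_Suc)
  finally show ?case using w x by (intro bexI[of _ "w \<oplus> x [^] k"]) auto
qed

lemma proper_ideal_le_maximalideal:
  assumes fin: "finite (carrier R)" and I: "ideal I R" and proper: "I \<noteq> carrier R"
  shows "\<exists>M. maximalideal M R \<and> I \<subseteq> M"
proof -
  let ?Q = "\<lambda>J. ideal J R \<and> I \<subseteq> J \<and> J \<noteq> carrier R"
  have "\<forall>J. ?Q J \<longrightarrow> card J < Suc (card (carrier R))"
    using fin by (metis card_mono ideal.Icarr le_imp_less_Suc subsetI)
  then obtain J where J: "?Q J" "\<forall>K. ?Q K \<longrightarrow> card K \<le> card J"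
    using ex_has_greatest_nat[of ?Q I card "Suc (card (carrier R))"] I proper by blast
  have "maximalideal J R"
  proof (rule maximalidealI)
    show "ideal J R" "carrier R \<noteq> J" using J by auto
    fix K assume K: "ideal K R" "J \<subseteq> K" "K \<subseteq> carrier R"
    show "K = J \<or> K = carrier R"
    proof (cases "K = carrier R")
      case False
      then have "card K \<le> card J" using J K by blast
      moreover have "finite K" using K fin finite_subset by blast
      ultimately show ?thesis using K(2) card_seteq by blast
    qed simp
  qed
  then show ?thesis using J by blast
qed

lemma unit_if_notin_maximalideals:
  assumes fin: "finite (carrier R)" and x: "x \<in> carrier R"
    and notin: "\<And>M. maximalideal M R \<Longrightarrow> x \<notin> M"
  shows "\<exists>r\<in>carrier R. r \<otimes> x = \<one>"
proof -
  have "PIdl x = carrier R"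
    using proper_ideal_le_maximalideal[OF fin cgenideal_ideal[OF x]] cgenideal_self[OF x] notin
    by blast
  then show ?thesis using cgenideal_mem_iff[of \<one> x] by auto
qed

lemma ring_hom_add_pow:
  assumes h: "h \<in> ring_hom R S" and S: "ring S" and a: "a \<in> carrier R"
  shows "h (add_pow R (k::nat) a) = add_pow S k (h a)"
proof (induction k)
  case 0
  then show ?case using ring_hom_zero[OF h ring_axioms S] by (simp add: add_pow_def)
next
  case (Suc k)
  have "h (add_pow R (Suc k) a) = h (add_pow R k a \<oplus> a)" by (simp add: add_pow_def)
  also have "\<dots> = h (add_pow R k a) \<oplus>\<^bsub>S\<^esub> h a"
    using a h by (simp add: ring_hom_add)
  finally show ?case using Suc by (simp add: add_pow_def)
qed

text \<open>The additive order of \<open>\<one>\<close> in the residue field \<open>R/M\<close> divides both \<open>n\<close> and \<open>|R/M|\<close>.\<close>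
lemma add_pow_one_notin_maximalideal:
  fixes n :: nat
  assumes M: "maximalideal M R" and cop: "coprime n (card (carrier (R Quot M)))"
  shows "add_pow R n \<one> \<notin> M"
proof
  assume nM: "add_pow R n \<one> \<in> M"
  interpret Mi: maximalideal M R by fact
  let ?Q = "R Quot M"
  interpret Q: ring ?Q by (rule Mi.quotient_is_ring)
  have one: "\<one>\<^bsub>?Q\<^esub> = M +> \<one>" by (simp add: FactRing_def)
  have "M +> add_pow R n \<one> = M" using a_rcos_zero[OF Mi.is_ideal nM] .
  then have "add_pow ?Q n (M +> \<one>) = \<zero>\<^bsub>?Q\<^esub>"
    using ring_hom_add_pow[OF Mi.rcos_ring_hom Q.ring_axioms, of \<one> n]
    by (simp add: FactRing_def)
  then have "add_pow ?Q n \<one>\<^bsub>?Q\<^esub> = \<zero>\<^bsub>?Q\<^esub>" by (simp only: one)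
  then have "group.ord (add_monoid ?Q) \<one>\<^bsub>?Q\<^esub> dvd n"
    using group.pow_eq_id[OF Q.a_group, of "\<one>\<^bsub>?Q\<^esub>" n] by (simp add: add_pow_def)
  moreover have "group.ord (add_monoid ?Q) \<one>\<^bsub>?Q\<^esub> dvd card (carrier ?Q)"
    using group.ord_dvd_group_order[OF Q.a_group, of "\<one>\<^bsub>?Q\<^esub>"] by (simp add: order_def)
  ultimately have "group.ord (add_monoid ?Q) \<one>\<^bsub>?Q\<^esub> = 1"
    using cop by (meson coprime_common_divisor_nat)
  then have "\<one>\<^bsub>?Q\<^esub> = \<zero>\<^bsub>?Q\<^esub>"
    using group.ord_eq_1[OF Q.a_group, of "\<one>\<^bsub>?Q\<^esub>"] by simp
  then have "M +> \<one> = M" using one by (simp add: FactRing_def)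
  then have "\<one> \<in> M" using Mi.rcos_const_imp_mem by simp
  then show False using Mi.I_notcarr Mi.one_imp_carrier by blast
qed

lemma add_pow_cancel:
  fixes n :: nat
  assumes fin: "finite (carrier R)"
    and cop: "\<And>M. maximalideal M R \<Longrightarrow> coprime n (card (carrier (R Quot M)))"
    and y: "y \<in> carrier R" and ny: "add_pow R n y = \<zero>"
  shows "y = \<zero>"
proof -
  obtain r where r: "r \<in> carrier R" "r \<otimes> add_pow R n \<one> = \<one>"
    using unit_if_notin_maximalideals[OF fin _ add_pow_one_notin_maximalideal[OF _ cop]]
    by auto
  have "add_pow R n \<one> \<otimes> y = \<zero>" using add_pow_ldistr[of \<one> y n] y ny by simp
  have "y = (r \<otimes> add_pow R n \<one>) \<otimes> y" by (simp only: r(2) l_one[OF y])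
  also have "\<dots> = r \<otimes> (add_pow R n \<one> \<otimes> y)" using r(1) y by (simp add: m_assoc)
  finally show ?thesis using \<open>add_pow R n \<one> \<otimes> y = \<zero>\<close> r by simp
qed

end

section \<open>Powers of a principal maximal ideal\<close>

locale principal_maximal_ideal = cring +
  fixes p
  assumes p_closed [simp]: "p \<in> carrier R"
    and maximal: "maximalideal (PIdl p) R"
    and finite_carrier: "finite (carrier R)"
begin

lemma exists_stable_pow: "\<exists>t\<ge>1. PIdl (p [^] t) = PIdl (p [^] Suc t)"
proof (rule ccontr)
  assume "\<not> ?thesis"
  then have strict: "PIdl (p [^] Suc t) \<subset> PIdl (p [^] t)" if "1 \<le> t" for t
    using that cgenideal_pow_antimono[OF p_closed, of t "Suc t"] by auto
  have fin: "finite (PIdl (p [^] (k::nat)))" for k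
    using finite_carrier cgenideal_subset by (rule rev_finite_subset) simp
  have "card (PIdl (p [^] Suc k)) + k \<le> card (carrier R)" for k
  proof (induction k)
    case 0
    show ?case using card_mono[OF finite_carrier cgenideal_subset] by simp
  next
    case (Suc k)
    then show ?case using psubset_card_mono[OF fin strict[of "Suc k"]] by simp
  qed
  from this[of "Suc (card (carrier R))"] show False by simp
qed

definition t :: nat where "t = stability_index R (PIdl p)"

lemma t_least:
  "1 \<le> t \<and> PIdl (p [^] t) = PIdl (p [^] Suc t)"
  "1 \<le> s \<Longrightarrow> PIdl (p [^] s) = PIdl (p [^] Suc s) \<Longrightarrow> t \<le> s"
  using LeastI_ex[OF exists_stable_pow] Least_le[of _ s]
  unfolding t_def stability_index_def ideal_pow_cgenideal[OF p_closed] by auto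

lemma cgenideal_pow_stable: "PIdl (p [^] (t + j)) = PIdl (p [^] t)"
proof (induction j)
  case (Suc j)
  have "PIdl (p [^] (t + Suc j)) = ideal_prod R (PIdl p) (PIdl (p [^] (t + j)))"
    using ideal_prod_cgenideal[of p] by (simp add: nat_pow_Suc2 m_comm)
  also have "\<dots> = PIdl (p [^] Suc t)"
    using Suc ideal_prod_cgenideal[of p] by (simp add: nat_pow_Suc2 m_comm)
  finally show ?case using t_least(1) by simp
qed simp

lemma pow_notin_cgenideal_pow_t:
  assumes "k < t" shows "p [^] k \<notin> PIdl (p [^] t)"
proof
  assume "p [^] k \<in> PIdl (p [^] t)"
  then have "PIdl (p [^] k) \<subseteq> PIdl (p [^] t)"
    by (rule cgenideal_minimal[OF cgenideal_ideal, rotated]) simp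
  moreover have "PIdl (p [^] t) \<subseteq> PIdl (p [^] Suc k)"
    using cgenideal_pow_antimono[OF p_closed, of "Suc k" t] assms by simp
  moreover have "PIdl (p [^] Suc k) \<subseteq> PIdl (p [^] k)"
    using cgenideal_pow_antimono[OF p_closed, of k "Suc k"] by simp
  ultimately have stable: "PIdl (p [^] k) = PIdl (p [^] Suc k)" by blast
  show False
  proof (cases "k = 0")
    case True
    have "PIdl (p [^] (0::nat)) = carrier R" by (auto simp: cgenideal_mem_iff)
    then show False using stable True maximalideal.I_notcarr[OF maximal] by simp
  next
    case False
    then show False using t_least(2)[of k] stable assms by simp
  qed
qed

text \<open>From \<open>1 = c p + a s\<close>, the element \<open>a s = 1 - c p\<close> divides \<open>1 - (c p)\<^sup>t\<close>.\<close>
lemma unit_mod_cgenideal_pow_t: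
  assumes s: "s \<in> carrier R" and sn: "s \<notin> PIdl p"
  shows "\<exists>u\<in>carrier R. \<exists>q\<in>PIdl (p [^] t). u \<otimes> s = \<one> \<oplus> q"
proof -
  let ?K = "Idl (PIdl p \<union> PIdl s)"
  have K: "ideal ?K R" using genideal_ideal cgenideal_subset s by simp
  have "PIdl p \<subseteq> ?K" "s \<in> ?K"
    using genideal_self[of "PIdl p \<union> PIdl s"] cgenideal_self[OF s] cgenideal_subset s by auto
  then have "?K = carrier R"
    using maximalideal.I_maximal[OF maximal K] sn ideal.Icarr[OF K] by blast
  then have "\<one> \<in> PIdl p <+>\<^bsub>R\<^esub> PIdl s"
    using union_genideal[OF cgenideal_ideal cgenideal_ideal] s by simp
  then obtain c a where ca: "c \<in> carrier R" "a \<in> carrier R" "c \<otimes> p \<oplus> a \<otimes> s = \<one>"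
    unfolding set_add_def' by (auto simp: cgenideal_mem_iff)
  obtain w where w: "w \<in> carrier R" "w \<otimes> (\<one> \<ominus> c \<otimes> p) = \<one> \<ominus> (c \<otimes> p) [^] t"
    using one_minus_dvd_one_minus_pow[of "c \<otimes> p"] ca by auto
  have "\<one> \<ominus> c \<otimes> p = (c \<otimes> p \<oplus> a \<otimes> s) \<ominus> c \<otimes> p" by (simp only: ca(3))
  also have "\<dots> = a \<otimes> s" using ca(1,2) s p_closed by algebra
  finally have "\<one> \<ominus> c \<otimes> p = a \<otimes> s" .
  then have "(w \<otimes> a) \<otimes> s = \<one> \<ominus> (c \<otimes> p) [^] t"
    using w ca s by (simp add: m_assoc)
  also have "\<dots> = \<one> \<oplus> \<ominus> (c [^] t) \<otimes> p [^] t"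
    using ca by (simp add: nat_pow_distrib l_minus minus_eq)
  finally have "(w \<otimes> a) \<otimes> s = \<one> \<oplus> \<ominus> (c [^] t) \<otimes> p [^] t" .
  then show ?thesis using w(1) ca(1,2) s
    by (intro bexI[of _ "w \<otimes> a"] bexI[of _ "\<ominus> (c [^] t) \<otimes> p [^] t"]) (auto simp: cgenideal_mem_iff)
qed

text \<open>Stability gives \<open>p\<^sup>t = r p\<^sup>2\<^sup>t\<close>, so \<open>f = r p\<^sup>t\<close> is an idempotent with \<open>p\<^sup>t f = p\<^sup>t\<close>;
  the complementary idempotent \<open>e = 1 - f\<close> cuts out the local factor \<open>R/(p\<^sup>t)\<close>.\<close>
lemma exists_idempotent_ann_pow_t:
  obtains e where "e \<in> carrier R" "e \<otimes> e = e" "p [^] t \<otimes> e = \<zero>"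
    "\<And>k::nat. p [^] k \<otimes> e = \<zero> \<Longrightarrow> p [^] k \<in> PIdl (p [^] t)"
proof -
  have "p [^] t \<in> PIdl (p [^] (t + t))"
    using cgenideal_pow_stable[of t] cgenideal_self[of "p [^] t"] by simp
  then obtain r where r: "r \<in> carrier R" "r \<otimes> p [^] (t + t) = p [^] t"
    by (auto simp: cgenideal_mem_iff)
  define f where "f = r \<otimes> p [^] t"
  have f: "f \<in> carrier R" using r(1) by (simp add: f_def)
  have pf: "p [^] t \<otimes> f = p [^] t"
    using r by (simp add: f_def nat_pow_mult[symmetric] m_lcomm)
  have ff: "f \<otimes> f = f"
    using r(1) pf by (simp add: f_def m_assoc)
  define e where "e = \<one> \<ominus> f"
  have e: "e \<in> carrier R" using f by (simp add: e_def)
  have "e \<otimes> e = \<one> \<ominus> f \<ominus> f \<oplus> f \<otimes> f" unfolding e_def using f by algebra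
  also have "\<dots> = e" unfolding ff e_def using f by algebra
  finally have ee: "e \<otimes> e = e" .
  have "p [^] t \<otimes> e = p [^] t \<ominus> p [^] t \<otimes> f"
    unfolding e_def using f nat_pow_closed[OF p_closed, of t] by algebra
  then have pe: "p [^] t \<otimes> e = \<zero>" by (simp add: pf)
  have "p [^] k \<in> PIdl (p [^] t)" if "p [^] k \<otimes> e = \<zero>" for k :: nat
  proof -
    have "p [^] k = p [^] k \<otimes> e \<oplus> p [^] k \<otimes> f"
      unfolding e_def using f nat_pow_closed[OF p_closed, of k] by algebra
    also have "\<dots> = (p [^] k \<otimes> r) \<otimes> p [^] t" using that f r(1) by (simp add: f_def m_assoc)
    finally show ?thesis using r(1) by (auto simp: cgenideal_mem_iff)
  qed
  with e ee pe show thesis by (rule that)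
qed

lemma exists_pow_factor:
  assumes g: "g \<in> carrier R"
  obtains v s where "v \<le> t" "s \<in> carrier R" "g = s \<otimes> p [^] v" "v < t \<Longrightarrow> s \<notin> PIdl p"
proof -
  have "g \<in> PIdl (p [^] (0::nat))" using g by (auto simp: cgenideal_mem_iff)
  then obtain v where v: "v \<le> t" "g \<in> PIdl (p [^] v)"
    and greatest: "\<And>k. k \<le> t \<Longrightarrow> g \<in> PIdl (p [^] k) \<Longrightarrow> k \<le> v"
    using Nat.ex_has_greatest_nat[of "\<lambda>k. k \<le> t \<and> g \<in> PIdl (p [^] k)" 0 t] by auto
  then obtain s where s: "s \<in> carrier R" "g = s \<otimes> p [^] v" by (auto simp: cgenideal_mem_iff)
  have unit: "s \<notin> PIdl p" if "v < t"
  proof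
    assume "s \<in> PIdl p"
    then obtain s' where "s' \<in> carrier R" "g = s' \<otimes> p [^] Suc v"
      using s by (auto simp: cgenideal_mem_iff m_assoc nat_pow_Suc2 m_comm)
    then have "g \<in> PIdl (p [^] Suc v)" by (auto simp: cgenideal_mem_iff)
    then show False using greatest[of "Suc v"] that by simp
  qed
  show thesis by (rule that[OF v(1) s unit])
qed

text \<open>Multiplying by \<open>p\<^sup>t\<^sup>-\<^sup>v e\<close> kills \<open>g = s p\<^sup>v\<close>; as the annihilator of \<open>g\<close> is \<open>(g)\<close>, whose square is zero,
  \<open>p\<^sup>2\<^sup>(\<^sup>t\<^sup>-\<^sup>v\<^sup>) e = 0\<close>, which forces \<open>2(t - v) \<ge> t\<close>.\<close>
lemma double_pow_factor_le_t:
  assumes g: "g \<in> carrier R" "g \<otimes> g = \<zero>"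
    and ann: "\<And>c. c \<in> carrier R \<Longrightarrow> c \<otimes> g = \<zero> \<Longrightarrow> c \<in> PIdl g"
    and s: "s \<in> carrier R" "g = s \<otimes> p [^] v" and v: "v \<le> t"
  shows "2 * v \<le> t"
proof (rule ccontr)
  assume "\<not> 2 * v \<le> t"
  then have lt: "(t - v) + (t - v) < t" using v by linarith
  obtain e where e: "e \<in> carrier R" "e \<otimes> e = e" "p [^] t \<otimes> e = \<zero>"
    and killed: "\<And>k::nat. p [^] k \<otimes> e = \<zero> \<Longrightarrow> p [^] k \<in> PIdl (p [^] t)"
    using exists_idempotent_ann_pow_t by blast
  define x where "x = p [^] (t - v) \<otimes> e"
  have x: "x \<in> carrier R" using e(1) by (simp add: x_def)
  have "x \<otimes> g = s \<otimes> (p [^] (t - v) \<otimes> p [^] v) \<otimes> e"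
    unfolding x_def s(2) using e(1) s(1) nat_pow_closed[OF p_closed, of v]
      nat_pow_closed[OF p_closed, of "t - v"] by algebra
  also have "\<dots> = \<zero>" using v e(1,3) s(1) by (simp add: nat_pow_mult m_assoc)
  finally obtain c where c: "c \<in> carrier R" "x = c \<otimes> g"
    using ann[OF x] by (auto simp: cgenideal_mem_iff)
  have "p [^] ((t - v) + (t - v)) \<otimes> e = p [^] (t - v) \<otimes> p [^] (t - v) \<otimes> (e \<otimes> e)"
    unfolding e(2) nat_pow_mult[OF p_closed, symmetric]
    using e(1) nat_pow_closed[OF p_closed, of "t - v"] by algebra
  also have "\<dots> = x \<otimes> x"
    unfolding x_def using e(1) nat_pow_closed[OF p_closed, of "t - v"] by algebra
  also have "\<dots> = (c \<otimes> c) \<otimes> (g \<otimes> g)" unfolding c(2) using c(1) g(1) by algebra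
  also have "\<dots> = \<zero>" using c(1) g(2) by simp
  finally show False using killed pow_notin_cgenideal_pow_t[OF lt] by blast
qed

text \<open>If \<open>2v < t\<close>, then \<open>s\<close> is a unit modulo \<open>p\<^sup>t\<close>, so \<open>g\<^sup>2 = 0\<close> puts \<open>p\<^sup>2\<^sup>v\<close> into \<open>(p\<^sup>t)\<close>.\<close>
lemma t_le_double_pow_factor:
  assumes gg: "g \<otimes> g = \<zero>" and s: "s \<in> carrier R" "s \<notin> PIdl p" "g = s \<otimes> p [^] v"
  shows "t \<le> 2 * v"
proof (rule ccontr)
  assume "\<not> t \<le> 2 * v"
  then have lt: "v + v < t" by simp
  obtain u q where u: "u \<in> carrier R" and q: "q \<in> carrier R" and us: "u \<otimes> s = \<one> \<oplus> q \<otimes> p [^] t"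
    using unit_mod_cgenideal_pow_t[OF s(1,2)] by (auto simp: cgenideal_mem_iff)
  let ?y = "(p [^] (v + v) \<otimes> q \<otimes> (\<one> \<oplus> \<one> \<oplus> q \<otimes> p [^] t)) \<otimes> p [^] t"
  have "\<zero> = (u \<otimes> u) \<otimes> (g \<otimes> g)" using u by (simp add: gg)
  also have "\<dots> = p [^] (v + v) \<otimes> ((u \<otimes> s) \<otimes> (u \<otimes> s))"
    unfolding s(3) nat_pow_mult[OF p_closed, symmetric]
    using u s(1) nat_pow_closed[OF p_closed, of v] by algebra
  also have "\<dots> = p [^] (v + v) \<oplus> ?y"
    unfolding us using q nat_pow_closed[OF p_closed, of t] nat_pow_closed[OF p_closed, of "v + v"]
    by algebra
  finally have "p [^] (v + v) = \<ominus> ?y"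
    using q by (intro sum_zero_eq_neg) simp_all
  moreover have "\<ominus> ?y \<in> PIdl (p [^] t)"
    using q by (auto simp: cgenideal_mem_iff l_minus
      intro!: bexI[of _ "\<ominus> (p [^] (v + v) \<otimes> q \<otimes> (\<one> \<oplus> \<one> \<oplus> q \<otimes> p [^] t))"])
  ultimately show False using pow_notin_cgenideal_pow_t[OF lt] by simp
qed

lemma even_t:
  assumes g: "g \<in> carrier R" "g \<otimes> g = \<zero>"
    and ann: "\<And>c. c \<in> carrier R \<Longrightarrow> c \<otimes> g = \<zero> \<Longrightarrow> c \<in> PIdl g"
  shows "even t"
proof -
  obtain v s where v: "v \<le> t" and s: "s \<in> carrier R" "g = s \<otimes> p [^] v"
    and unit: "v < t \<Longrightarrow> s \<notin> PIdl p"
    using exists_pow_factor[OF g(1)] by blast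
  have "2 * v \<le> t" by (rule double_pow_factor_le_t[OF g ann s v])
  then have "v < t" using t_least(1) by linarith
  then have "t \<le> 2 * v" using t_le_double_pow_factor[OF g(2) s(1) unit s(2)] by simp
  with \<open>2 * v \<le> t\<close> show ?thesis by presburger
qed

end

section \<open>Constant words in cyclic codes\<close>

definition const_word :: "('a, 'b) ring_scheme \<Rightarrow> nat \<Rightarrow> 'a \<Rightarrow> nat \<Rightarrow> 'a" where
  "const_word R n a = (\<lambda>i. if i < n then a else \<zero>\<^bsub>R\<^esub>)"

fun shift_sum :: "('a, 'b) ring_scheme \<Rightarrow> nat \<Rightarrow> (nat \<Rightarrow> 'a) \<Rightarrow> nat \<Rightarrow> nat \<Rightarrow> 'a" where
  "shift_sum R n v 0 = word_zero R"
| "shift_sum R n v (Suc m) = word_add R n (shift_sum R n v m) ((cyc_shift R n ^^ m) v)"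

definition const_word_ideal :: "('a, 'b) ring_scheme \<Rightarrow> nat \<Rightarrow> (nat \<Rightarrow> 'a) set \<Rightarrow> 'a set" where
  "const_word_ideal R n C = {a \<in> carrier R. const_word R n a \<in> C}"

lemma reflect_mod_involution:
  fixes i k n :: nat
  assumes "k < n" "i < n"
  shows "(i + n - (i + n - k) mod n) mod n = k"
proof (cases "k \<le> i")
  case True
  then have "(i + n - k) mod n = i - k" using assms by (simp add: mod_if)
  then show ?thesis using True assms by simp
qed (use assms in \<open>simp add: mod_if\<close>)

lemma mod_pred_shift:
  fixes i k n :: nat
  assumes "Suc k \<le> n" "i < n"
  shows "((i + n - 1) mod n + n - k) mod n = (i + n - Suc k) mod n"
proof -
  have "(i + n - 1) mod n + n - k = (i + n - 1) mod n + (n - k)" using assms by simp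
  then have "((i + n - 1) mod n + n - k) mod n = ((i + n - 1) + (n - k)) mod n"
    by (simp add: mod_add_left_eq)
  also have "(i + n - 1) + (n - k) = (i + n - Suc k) + n" using assms by simp
  finally show ?thesis by simp
qed

context cring
begin

lemma words_carrier: "v \<in> words R n \<Longrightarrow> i < n \<Longrightarrow> v i \<in> carrier R"
  unfolding words_def by blast

lemma const_word_in_words: "a \<in> carrier R \<Longrightarrow> const_word R n a \<in> words R n"
  unfolding words_def const_word_def by auto

lemma word_smult_const_word: "word_smult R n r (const_word R n a) = const_word R n (r \<otimes> a)"
  unfolding word_smult_def const_word_def by auto

lemma word_add_const_word: "word_add R n (const_word R n a) (const_word R n b) = const_word R n (a \<oplus> b)"
  unfolding word_add_def const_word_def by auto

lemma const_word_zero: "const_word R n \<zero> = word_zero R"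
  unfolding word_zero_def const_word_def by auto

lemma inner_prod_const_word:
  assumes v: "v \<in> words R n" and c: "c \<in> carrier R"
  shows "inner_prod R n (const_word R n c) v = c \<otimes> (\<Oplus>j\<in>{..<n}. v j)"
proof -
  have "inner_prod R n (const_word R n c) v = (\<Oplus>j\<in>{..<n}. c \<otimes> v j)"
    unfolding inner_prod_def by (rule finsum_cong') (auto simp: const_word_def c words_carrier[OF v])
  also have "\<dots> = c \<otimes> (\<Oplus>j\<in>{..<n}. v j)"
    using finsum_rdistr[OF _ c, of "{..<n}" v] words_carrier[OF v] by (simp add: Pi_def)
  finally show ?thesis .
qed

lemma inner_prod_const_words:
  assumes "a \<in> carrier R" "b \<in> carrier R"
  shows "inner_prod R n (const_word R n a) (const_word R n b) = add_pow R n (a \<otimes> b)"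
proof -
  have "inner_prod R n (const_word R n a) (const_word R n b) = (\<Oplus>j\<in>{..<n}. a \<otimes> b)"
    unfolding inner_prod_def by (rule finsum_cong') (auto simp: const_word_def assms)
  then show ?thesis using add.finprod_const[of "a \<otimes> b" "{..<n}"] assms by simp
qed

lemma cyc_shift_pow_apply:
  assumes "k \<le> n" "i < n"
  shows "(cyc_shift R n ^^ k) v i = v ((i + n - k) mod n)"
  using assms
proof (induction k arbitrary: i)
  case (Suc k)
  have "(cyc_shift R n ^^ Suc k) v i = (cyc_shift R n ^^ k) v ((i + n - 1) mod n)"
    using Suc.prems by (simp add: cyc_shift_def)
  also have "\<dots> = v (((i + n - 1) mod n + n - k) mod n)"
    using Suc by simp
  also have "((i + n - 1) mod n + n - k) mod n = (i + n - Suc k) mod n"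
    using mod_pred_shift Suc.prems by simp
  finally show ?case .
qed simp

lemma cyclic_code_shift_pow_closed:
  "cyclic_code R n C \<Longrightarrow> v \<in> C \<Longrightarrow> (cyc_shift R n ^^ k) v \<in> C"
  by (induction k) (auto simp: cyclic_code_def)

lemma shift_sum_in_code:
  "cyclic_code R n C \<Longrightarrow> v \<in> C \<Longrightarrow> shift_sum R n v m \<in> C"
  by (induction m) (auto simp: cyclic_code_def linear_code_def cyclic_code_shift_pow_closed)

lemma shift_sum_apply:
  assumes cc: "cyclic_code R n C" and v: "v \<in> C" and i: "i < n"
  shows "shift_sum R n v m i = (\<Oplus>k\<in>{..<m}. (cyc_shift R n ^^ k) v i)"
proof (induction m)
  case (Suc m)
  have "(cyc_shift R n ^^ k) v i \<in> carrier R" for k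
    using cyclic_code_shift_pow_closed[OF cc v] cc i
    by (auto simp: cyclic_code_def linear_code_def intro: words_carrier)
  then show ?case using Suc i by (simp add: word_add_def lessThan_Suc finsum_insert a_comm)
qed (simp add: word_zero_def)

lemma finsum_reflect_mod:
  fixes i n :: nat
  assumes i: "i < n" and v: "\<And>j. j < n \<Longrightarrow> v j \<in> carrier R"
  shows "(\<Oplus>k\<in>{..<n}. v ((i + n - k) mod n)) = (\<Oplus>j\<in>{..<n}. v j)"
proof -
  let ?h = "\<lambda>k. (i + n - k) mod n"
  have "bij_betw ?h {..<n} {..<n}"
    by (rule bij_betw_byWitness[where f' = ?h]) (use i in \<open>auto intro: reflect_mod_involution\<close>)
  then have "?h ` {..<n} = {..<n}" "inj_on ?h {..<n}" by (auto simp: bij_betw_def)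
  then show ?thesis using finsum_reindex[of v ?h "{..<n}"] v by (simp add: Pi_def)
qed

text \<open>The constant word is the sum of all cyclic shifts of \<open>v\<close>.\<close>
lemma cyclic_code_const_word_sum:
  assumes cc: "cyclic_code R n C" and v: "v \<in> C"
  shows "const_word R n (\<Oplus>j\<in>{..<n}. v j) \<in> C"
proof -
  have vw: "v \<in> words R n" using cc v by (auto simp: cyclic_code_def linear_code_def)
  have "shift_sum R n v n = const_word R n (\<Oplus>j\<in>{..<n}. v j)"
  proof
    fix i
    show "shift_sum R n v n i = const_word R n (\<Oplus>j\<in>{..<n}. v j) i"
    proof (cases "i < n")
      case True
      then have "shift_sum R n v n i = (\<Oplus>k\<in>{..<n}. v ((i + n - k) mod n))"
        using shift_sum_apply[OF cc v] words_carrier[OF vw]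
        by (auto simp: cyc_shift_pow_apply intro: finsum_cong')
      then show ?thesis
        using True finsum_reflect_mod[OF True words_carrier[OF vw]] by (simp add: const_word_def)
    next
      case False
      have "shift_sum R n v n \<in> words R n"
        using shift_sum_in_code[OF cc v] cc by (auto simp: cyclic_code_def linear_code_def)
      then show ?thesis using False by (simp add: words_def const_word_def)
    qed
  qed
  then show ?thesis using shift_sum_in_code[OF cc v] by metis
qed

lemma ideal_const_word_ideal:
  assumes C: "linear_code R n C"
  shows "ideal (const_word_ideal R n C) R"
proof -
  let ?J = "const_word_ideal R n C"
  have smult: "x \<otimes> a \<in> ?J" if "a \<in> ?J" "x \<in> carrier R" for a x
    using C that by (auto simp: const_word_ideal_def linear_code_def word_smult_const_word[symmetric])
  show ?thesis
  proof (rule idealI[OF ring_axioms])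
    show "subgroup ?J (add_monoid R)"
    proof (rule add.subgroupI)
      show "?J \<subseteq> carrier R" by (auto simp: const_word_ideal_def)
      have "\<zero> \<in> ?J"
        using C by (auto simp: const_word_ideal_def linear_code_def const_word_zero)
      then show "?J \<noteq> {}" by blast
      fix a b assume a: "a \<in> ?J" and b: "b \<in> ?J"
      then show "a \<oplus> b \<in> ?J"
        using C by (auto simp: const_word_ideal_def linear_code_def word_add_const_word[symmetric])
      have "(\<ominus> \<one>) \<otimes> a \<in> ?J" using smult[OF a] by simp
      then show "\<ominus> a \<in> ?J" using a by (simp add: const_word_ideal_def l_minus)
    qed
    show "x \<otimes> a \<in> ?J" "a \<otimes> x \<in> ?J" if "a \<in> ?J" "x \<in> carrier R" for a x
      using smult[OF that] that by (auto simp: const_word_ideal_def m_comm)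
  qed
qed

lemma self_dual_const_word_ideal_orthogonal:
  assumes sd: "self_dual R n C" and a: "a \<in> const_word_ideal R n C" and b: "b \<in> const_word_ideal R n C"
  shows "add_pow R n (a \<otimes> b) = \<zero>"
proof -
  have "const_word R n a \<in> dual_code R n C" "const_word R n b \<in> C"
    using sd a b by (auto simp: self_dual_def const_word_ideal_def)
  then show ?thesis
    using a b inner_prod_const_words by (auto simp: dual_code_def const_word_ideal_def)
qed

text \<open>The inner product of the constant word \<open>c\<close> with a codeword is \<open>c\<close> times its coordinate sum,
  which lies in the ideal.\<close>
lemma self_dual_cyclic_const_word_ideal_annihilator:
  assumes cc: "cyclic_code R n C" and sd: "self_dual R n C" and c: "c \<in> carrier R"
    and ann: "\<And>a. a \<in> const_word_ideal R n C \<Longrightarrow> c \<otimes> a = \<zero>"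
  shows "c \<in> const_word_ideal R n C"
proof -
  have "inner_prod R n (const_word R n c) w = \<zero>" if w: "w \<in> C" for w
  proof -
    have ww: "w \<in> words R n" using cc w by (auto simp: cyclic_code_def linear_code_def)
    then have "(\<Oplus>j\<in>{..<n}. w j) \<in> const_word_ideal R n C"
      using cyclic_code_const_word_sum[OF cc w] words_carrier[OF ww]
      by (auto simp: const_word_ideal_def intro: finsum_closed)
    then show ?thesis using ann inner_prod_const_word[OF ww c] by simp
  qed
  then have "const_word R n c \<in> dual_code R n C"
    using const_word_in_words[OF c] by (simp add: dual_code_def)
  then show ?thesis using sd c by (simp add: self_dual_def const_word_ideal_def)
qed

lemma self_dual_cyclic_code_generator:
  assumes fin: "finite (carrier R)"
    and princ: "\<forall>I. ideal I R \<longrightarrow> principalideal I R"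
    and cop: "\<And>M. maximalideal M R \<Longrightarrow> coprime n (card (carrier (R Quot M)))"
    and cc: "cyclic_code R n C" and sd: "self_dual R n C"
  obtains g where "g \<in> carrier R" "g \<otimes> g = \<zero>"
    "\<And>c. c \<in> carrier R \<Longrightarrow> c \<otimes> g = \<zero> \<Longrightarrow> c \<in> PIdl g"
proof -
  let ?J = "const_word_ideal R n C"
  have "ideal ?J R" using cc by (simp add: cyclic_code_def ideal_const_word_ideal)
  then obtain g where g: "g \<in> carrier R" and "?J = Idl {g}"
    using princ principalideal.generate by blast
  then have J: "?J = PIdl g" by (simp add: cgenideal_eq_genideal)
  then have "g \<in> ?J" using cgenideal_self[OF g] by simp
  then have "add_pow R n (g \<otimes> g) = \<zero>"
    using self_dual_const_word_ideal_orthogonal[OF sd] by blast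
  then have "g \<otimes> g = \<zero>" using add_pow_cancel[OF fin cop] g by simp
  moreover have "c \<in> PIdl g" if c: "c \<in> carrier R" "c \<otimes> g = \<zero>" for c
  proof -
    have "c \<otimes> (r \<otimes> g) = \<zero>" if "r \<in> carrier R" for r
      using m_lcomm[OF c(1) that g] c(2) that by simp
    then show ?thesis
      using self_dual_cyclic_const_word_ideal_annihilator[OF cc sd c(1)] J
      by (auto simp: cgenideal_mem_iff)
  qed
  ultimately show thesis using g that by blast
qed

lemma self_dual_cyclic_code_imp_even_stability_index:
  assumes fin: "finite (carrier R)"
    and princ: "\<forall>I. ideal I R \<longrightarrow> principalideal I R"
    and cop: "\<And>M. maximalideal M R \<Longrightarrow> coprime n (card (carrier (R Quot M)))"
    and cc: "cyclic_code R n C" and sd: "self_dual R n C"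
    and m: "maximalideal m R"
  shows "even (stability_index R m)"
proof -
  obtain g where g: "g \<in> carrier R" "g \<otimes> g = \<zero>"
    and ann: "\<And>c. c \<in> carrier R \<Longrightarrow> c \<otimes> g = \<zero> \<Longrightarrow> c \<in> PIdl g"
    using self_dual_cyclic_code_generator[OF fin princ cop cc sd] by blast
  have "principalideal m R" using princ maximalideal.axioms(1)[OF m] by blast
  then obtain p where p: "p \<in> carrier R" "m = Idl {p}" using principalideal.generate by blast
  then have "m = PIdl p" by (simp add: cgenideal_eq_genideal)
  with m have "maximalideal (PIdl p) R" by simp
  then interpret principal_maximal_ideal R p
    using principal_maximal_ideal.intro[OF is_cring principal_maximal_ideal_axioms.intro] p(1) fin
    by blast
  show ?thesis using even_t[OF g ann] \<open>m = PIdl p\<close> by (simp add: t_def)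
qed

end

theorem mainTheorem17:
  fixes R :: "('a, 'b) ring_scheme" and n :: nat
  assumes "cring R"
    and "finite (carrier R)"
    and "\<forall>I. ideal I R \<longrightarrow> principalideal I R"
    and "n > 0"
    and "\<forall>m. maximalideal m R \<longrightarrow> coprime n (card (carrier (R Quot m)))"
    and "\<exists>m. maximalideal m R \<and> odd (stability_index R m)"
  shows "\<not> (\<exists>C. cyclic_code R n C \<and> self_dual R n C)"
proof
  assume "\<exists>C. cyclic_code R n C \<and> self_dual R n C"
  then obtain C where C: "cyclic_code R n C" "self_dual R n C" by blast
  obtain m where m: "maximalideal m R" "odd (stability_index R m)" using assms(6) by blast
  have "even (stability_index R m)"
    using cring.self_dual_cyclic_code_imp_even_stability_index[OF assms(1-3) _ C m(1)] assms(5)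
    by blast
  with m(2) show False by simp
qed

end
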